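(* Let $Z\in\Theta_2(r_0,s_0)$ and let $r_1<r_2<r_0$, $s_1<s_2<s_0$. Then for any $Y\in\Theta_2(r_1,s_1)$, $$\|P_{\Theta_2(r_2,s_2)}(Z)-Z\|_{\rm F}\le(\alpha+\beta+\alpha\beta)\,\|Y-Z\|_{\rm F},$$ where $\alpha=\sqrt{(s_0-s_2)/(s_0-s_1)}$ and $\beta=\sqrt{(r_0-r_2)/(r_0-r_1)}$.
   Context: For $A\in\mathbb{R}^{d_1\times d_2\times d_3}$, its slices are $A_{\cdot\cdot j_3}=(A_{j_1j_2j_3})_{j_1,j_2}\in\mathbb{R}^{d_1\times d_2}$, $1\le j_3\le d_3$; $\|\cdot\|_{\rm F}$ is the Frobenius norm. $\Theta_2(r,s)=\{A\in\mathbb{R}^{d_1\times d_2\times d_3}: \max_{j_3}\mathrm{rank}(A_{\cdot\cdot j_3})\le r,\ \sum_{j_3}\mathbb{1}(A_{\cdot\cdot j_3}\ne0)\le s\}$. $P_{\Theta_2(r,s)}(A)$ is defined in two steps: (1) replace each slice $A_{\cdot\cdot j_3}$ by its best rank-$r$ Frobenius-norm approximation $\tilde A_{\cdot\cdot j_3}$; (2) keep the $s$ slices with the largest $\|\tilde A_{\cdot\cdot j_3}\|_{\rm F}$ and set all other slices to zero. *)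

theory Defs
  imports "HOL-Analysis.Analysis"
begin

text \<open>A tensor in R^(d1 x d2 x d3) is represented by its family of slices:
  a function from the (finite) third index type 'k to d1 x d2 real matrices
  real^'n^'m (d1 = CARD('m), d2 = CARD('n), d3 = CARD('k)).\<close>

type_synonym ('n,'m,'k) tensor3 = "'k \<Rightarrow> real^'n^'m"

definition frob_mat :: "real^'n^'m \<Rightarrow> real" where
  "frob_mat M = sqrt (\<Sum>i\<in>UNIV. \<Sum>j\<in>UNIV. (M $ i $ j)^2)"

definition frob :: "('k::finite \<Rightarrow> real^'n^'m) \<Rightarrow> real" where
  "frob A = sqrt (\<Sum>k\<in>UNIV. \<Sum>i\<in>UNIV. \<Sum>j\<in>UNIV. (A k $ i $ j)^2)"

definition Theta2 :: "nat \<Rightarrow> nat \<Rightarrow> ('k::finite \<Rightarrow> real^'n^'m) set" where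
  "Theta2 r s = {A. (\<forall>k. rank (A k) \<le> r) \<and> card {k. A k \<noteq> 0} \<le> s}"

definition best_rank_approx :: "nat \<Rightarrow> real^'n^'m \<Rightarrow> real^'n^'m \<Rightarrow> bool" where
  "best_rank_approx r M B \<longleftrightarrow> rank B \<le> r \<and>
     (\<forall>C. rank C \<le> r \<longrightarrow> frob_mat (M - C) \<ge> frob_mat (M - B))"

text \<open>X is a possible value of P_{Theta2(r,s)}(A): every slice replaced by a best
  rank-r approximation, then the s slices (all slices if s >= d3) of largest
  Frobenius norm are kept (ties broken arbitrarily), the rest set to zero.\<close>
definition is_P_Theta2 :: "nat \<Rightarrow> nat \<Rightarrow> ('k::finite \<Rightarrow> real^'n^'m)
    \<Rightarrow> ('k \<Rightarrow> real^'n^'m) \<Rightarrow> bool" where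
  "is_P_Theta2 r s A X \<longleftrightarrow>
     (\<exists>At S. (\<forall>k. best_rank_approx r (A k) (At k)) \<and>
        card S = min s CARD('k) \<and>
        (\<forall>k\<in>S. \<forall>k'. k' \<notin> S \<longrightarrow> frob_mat (At k') \<le> frob_mat (At k)) \<and>
        (\<forall>k. X k = (if k \<in> S then At k else 0)))"

end

theory Submission
  imports Defs
begin

(*
  For one slice M with rank M <= r0 let sigma_0 >= sigma_1 >= ... be its singular values, so
  that sigma_i = 0 for i >= r0. A best rank-r2 approximation of M misses at most the tail
  sum of sigma_i^2 over i >= r2, while every matrix of rank at most r1 lies at squared
  distance at least the tail sum over i >= r1 (Eckart--Young). As the sigma_i decrease and
  at most r0 - r1 terms of the second tail are nonzero, the first tail is at most
  (r0 - r2) / (r0 - r1) times the second. The same averaging, applied to the energies of the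
  slices of the slicewise approximation Zr of Z (at most s0 of them nonzero), shows that
  keeping only the s2 largest slices costs at most (s0 - s2) / (s0 - s1) times the energy of
  Zr outside the support of Y. Hence |Zr - Z| <= beta |Y - Z| and
  |X - Zr| <= alpha |Y - Zr| <= alpha (1 + beta) |Y - Z|, and the triangle inequality
  through Zr concludes.
*)

section \<open>Frobenius norms\<close>

lemma frob_mat_eq_norm: "frob_mat M = norm M"
  unfolding frob_mat_def norm_vec_def L2_set_def by (simp add: power2_eq_square sum_nonneg)

lemma frob_eq_norm: "frob A = norm (\<chi> k. A k)"
  unfolding frob_def norm_vec_def L2_set_def by (simp add: power2_eq_square sum_nonneg)

lemma norm_vec_power2: "norm (x :: 'a::real_normed_vector^'n) ^ 2 = (\<Sum>i\<in>UNIV. norm (x $ i) ^ 2)"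
  unfolding norm_vec_def L2_set_def by (simp add: sum_nonneg)

lemma frob_power2: "frob A ^ 2 = (\<Sum>k\<in>UNIV. norm (A k) ^ 2)"
  by (simp add: frob_eq_norm norm_vec_power2)

lemma frob_nonneg: "0 \<le> frob A"
  by (simp add: frob_eq_norm)

lemma frob_minus_commute: "frob (A - B) = frob (B - A)"
  by (simp add: frob_def power2_commute)

lemma frob_triangle: "frob (A - C) \<le> frob (A - B) + frob (B - C)"
proof -
  have "(\<chi> k. (A - C) k) = (\<chi> k. (A - B) k) + (\<chi> k. (B - C) k)"
    by (simp add: vec_eq_iff)
  then show ?thesis
    unfolding frob_eq_norm by (metis norm_triangle_ineq)
qed

lemma frob_le_sqrt_mult_if_slices_le:
  assumes "\<And>k. norm (A k) ^ 2 \<le> c * norm (B k) ^ 2" "0 \<le> c"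
  shows "frob A \<le> sqrt c * frob B"
proof (rule power2_le_imp_le)
  have "frob A ^ 2 \<le> (\<Sum>k\<in>UNIV. c * norm (B k) ^ 2)"
    unfolding frob_power2 by (rule sum_mono) (rule assms(1))
  then show "frob A ^ 2 \<le> (sqrt c * frob B) ^ 2"
    using assms(2) by (simp add: power_mult_distrib frob_power2 sum_distrib_left)
  show "0 \<le> sqrt c * frob B"
    using assms(2) by (simp add: frob_nonneg)
qed

section \<open>Orthonormal families\<close>

definition orthonormal_on :: "('i \<Rightarrow> 'a::real_inner) \<Rightarrow> 'i set \<Rightarrow> bool" where
  "orthonormal_on e I \<longleftrightarrow> (\<forall>i\<in>I. \<forall>j\<in>I. inner (e i) (e j) = (if i = j then 1 else 0))"

lemma orthonormal_on_norm: "orthonormal_on e I \<Longrightarrow> i \<in> I \<Longrightarrow> norm (e i) = 1"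
  by (simp add: orthonormal_on_def norm_eq_sqrt_inner)

lemma orthonormal_on_extend:
  assumes "orthonormal_on v {..<k}" "norm u = 1" "\<And>j. j < k \<Longrightarrow> inner u (v j) = 0"
  shows "orthonormal_on (v(k := u)) {..<Suc k}"
  unfolding orthonormal_on_def
proof (intro ballI)
  fix i j assume "i \<in> {..<Suc k}" "j \<in> {..<Suc k}"
  then consider "i < k" "j < k" | "i = k" "j < k" | "i < k" "j = k" | "i = k" "j = k"
    by fastforce
  then show "inner ((v(k := u)) i) ((v(k := u)) j) = (if i = j then 1 else 0)"
  proof cases
    case 1
    then show ?thesis using assms(1) by (simp add: orthonormal_on_def)
  next
    case 2
    then show ?thesis using assms(3) by simp
  next
    case 3
    then show ?thesis using assms(3)[of i] by (simp add: inner_commute)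
  next
    case 4
    then show ?thesis using assms(2) by (simp add: dot_square_norm)
  qed
qed

lemma orthonormal_on_independent:
  assumes "orthonormal_on e I"
  shows "inj_on e I" "independent (e ` I)"
proof -
  have e: "inner (e i) (e j) = (if i = j then 1 else 0)" if "i \<in> I" "j \<in> I" for i j
    using assms that by (simp add: orthonormal_on_def)
  show "inj_on e I"
  proof (rule inj_onI)
    fix i j assume "i \<in> I" "j \<in> I" "e i = e j"
    then show "i = j"
      using e[of i j] e[of i i] by (metis zero_neq_one)
  qed
  have "pairwise orthogonal (e ` I)"
  proof (rule pairwiseI)
    fix x y assume "x \<in> e ` I" "y \<in> e ` I" "x \<noteq> y"
    then obtain i j where "i \<in> I" "j \<in> I" "x = e i" "y = e j" "i \<noteq> j"
      by blast
    then show "orthogonal x y"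
      using e[of i j] by (simp add: orthogonal_def)
  qed
  moreover have "0 \<notin> e ` I"
  proof
    assume "0 \<in> e ` I"
    then obtain i where "i \<in> I" "e i = 0"
      by (metis imageE)
    then show False
      using e[of i i] by simp
  qed
  ultimately show "independent (e ` I)"
    by (rule pairwise_orthogonal_independent)
qed

lemma orthonormal_on_residual_orthogonal:
  assumes "orthonormal_on e I" "finite I" "j \<in> I"
  shows "inner (x - (\<Sum>i\<in>I. inner x (e i) *\<^sub>R e i)) (e j) = 0"
proof -
  have "inner (\<Sum>i\<in>I. inner x (e i) *\<^sub>R e i) (e j) = (\<Sum>i\<in>I. if i = j then inner x (e j) else 0)"
    unfolding inner_sum_left by (rule sum.cong) (use assms in \<open>auto simp: orthonormal_on_def\<close>)
  also have "\<dots> = inner x (e j)"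
    using assms by simp
  finally show ?thesis
    by (simp add: inner_diff_left)
qed

lemma orthonormal_on_residual_norm:
  assumes "orthonormal_on e I" "finite I"
  shows "norm (x - (\<Sum>i\<in>I. inner x (e i) *\<^sub>R e i)) ^ 2 = norm x ^ 2 - (\<Sum>i\<in>I. inner x (e i) ^ 2)"
proof -
  let ?p = "\<Sum>i\<in>I. inner x (e i) *\<^sub>R e i"
  have "inner (x - ?p) ?p = 0"
    using orthonormal_on_residual_orthogonal[OF assms] by (simp add: inner_sum_right)
  moreover have "inner x ?p = (\<Sum>i\<in>I. inner x (e i) ^ 2)"
    by (simp add: inner_sum_right power2_eq_square)
  ultimately show ?thesis
    by (simp add: power2_norm_eq_inner inner_diff_left inner_diff_right inner_commute)
qed

lemma orthonormal_on_Bessel: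
  assumes "orthonormal_on e I" "finite I"
  shows "(\<Sum>i\<in>I. inner x (e i) ^ 2) \<le> norm x ^ 2"
  using orthonormal_on_residual_norm[OF assms, of x] by (metis diff_ge_0_iff_ge zero_le_power2)

lemma orthonormal_on_dist_span_ge:
  assumes "orthonormal_on e I" "finite I" "y \<in> span (e ` I)"
  shows "norm x ^ 2 - (\<Sum>i\<in>I. inner x (e i) ^ 2) \<le> norm (x - y) ^ 2"
proof -
  define p where "p = (\<Sum>i\<in>I. inner x (e i) *\<^sub>R e i)"
  have "p \<in> span (e ` I)"
    unfolding p_def by (intro span_sum span_scale span_base) auto
  then have "p - y \<in> span (e ` I)"
    using assms(3) by (rule span_diff)
  moreover have "orthogonal (x - p) w" if "w \<in> e ` I" for w
    using that orthonormal_on_residual_orthogonal[OF assms(1,2)] by (auto simp: p_def orthogonal_def)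
  ultimately have "orthogonal (x - p) (p - y)"
    by (rule orthogonal_to_span)
  then have "norm ((x - p) + (p - y)) ^ 2 = norm (x - p) ^ 2 + norm (p - y) ^ 2"
    by (rule norm_add_Pythagorean)
  then have "norm (x - y) ^ 2 = norm (x - p) ^ 2 + norm (p - y) ^ 2"
    by simp
  then show ?thesis
    using orthonormal_on_residual_norm[OF assms(1,2), of x] by (simp add: p_def)
qed

lemma orthonormal_on_Parseval:
  fixes e :: "nat \<Rightarrow> 'a::euclidean_space"
  assumes "orthonormal_on e {..<DIM('a)}"
  shows "x = (\<Sum>i<DIM('a). inner x (e i) *\<^sub>R e i)"
    and "norm x ^ 2 = (\<Sum>i<DIM('a). inner x (e i) ^ 2)"
proof -
  define p where "p = (\<Sum>i<DIM('a). inner x (e i) *\<^sub>R e i)"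
  have "card (e ` {..<DIM('a)}) = DIM('a)"
    using orthonormal_on_independent(1)[OF assms] by (simp add: card_image)
  then have "UNIV \<subseteq> span (e ` {..<DIM('a)})"
    using card_ge_dim_independent[OF subset_UNIV orthonormal_on_independent(2)[OF assms]]
    by simp
  then have "x - p \<in> span (e ` {..<DIM('a)})"
    by blast
  moreover have "orthogonal (x - p) w" if "w \<in> e ` {..<DIM('a)}" for w
    using that orthonormal_on_residual_orthogonal[OF assms finite_lessThan]
    by (auto simp: p_def orthogonal_def)
  ultimately have "orthogonal (x - p) (x - p)"
    by (rule orthogonal_to_span)
  then show "x = (\<Sum>i<DIM('a). inner x (e i) *\<^sub>R e i)"
    by (simp add: orthogonal_def p_def)
  then show "norm x ^ 2 = (\<Sum>i<DIM('a). inner x (e i) ^ 2)"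
    using orthonormal_on_residual_norm[OF assms finite_lessThan, of x] by simp
qed

section \<open>Averaging inequalities\<close>

lemma sum_lessThan_split:
  fixes f :: "nat \<Rightarrow> 'a::comm_monoid_add"
  assumes "r \<le> n"
  shows "(\<Sum>i<n. f i) = (\<Sum>i<r. f i) + (\<Sum>i=r..<n. f i)"
  using sum.atLeastLessThan_concat[of 0 r n f] assms by (simp add: atLeast0LessThan)

lemma weighted_sum_le_head_sum:
  fixes \<mu> c :: "nat \<Rightarrow> real"
  assumes dec: "\<And>i j. i \<le> j \<Longrightarrow> j < n \<Longrightarrow> \<mu> j \<le> \<mu> i"
    and nonneg: "\<And>i. i < n \<Longrightarrow> 0 \<le> \<mu> i"
    and c: "\<And>i. i < n \<Longrightarrow> 0 \<le> c i \<and> c i \<le> 1" "(\<Sum>i<n. c i) \<le> real r"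
  shows "(\<Sum>i<n. \<mu> i * c i) \<le> (\<Sum>i<min r n. \<mu> i)"
proof (cases "n \<le> r")
  case True
  then show ?thesis
    using c(1) nonneg by (auto intro: sum_mono mult_left_le)
next
  case False
  have head: "(\<Sum>i<r. \<mu> i * c i - \<mu> i) \<le> (\<Sum>i<r. \<mu> r * (c i - 1))"
  proof (rule sum_mono)
    fix i assume "i \<in> {..<r}"
    then have "\<mu> i * (c i - 1) \<le> \<mu> r * (c i - 1)"
      using False dec[of i r] c(1)[of i] by (intro mult_right_mono_neg) auto
    then show "\<mu> i * c i - \<mu> i \<le> \<mu> r * (c i - 1)"
      by (simp add: algebra_simps)
  qed
  have tail: "(\<Sum>i=r..<n. \<mu> i * c i) \<le> (\<Sum>i=r..<n. \<mu> r * c i)"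
    using dec c(1) by (intro sum_mono mult_right_mono) auto
  have "(\<Sum>i<r. \<mu> r * (c i - 1)) + (\<Sum>i=r..<n. \<mu> r * c i) = \<mu> r * ((\<Sum>i<n. c i) - r)"
    using False by (simp add: sum_lessThan_split[of r n c] sum_distrib_left sum_subtractf algebra_simps)
  also have "\<dots> \<le> 0"
    using False nonneg[of r] c(2) by (simp add: mult_nonneg_nonpos)
  finally show ?thesis
    using head tail False sum_lessThan_split[of r n "\<lambda>i. \<mu> i * c i"]
    by (simp add: sum_subtractf)
qed

lemma le_ratio_if_exchange:
  fixes L m a b R :: real
  assumes "0 \<le> a" "0 < b" "L \<le> m * a" "L + m * b \<le> R"
  shows "L \<le> a / (a + b) * R"
proof -
  have "L * b \<le> m * a * b"
    using assms(2,3) by (simp add: mult_right_mono)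
  moreover have "a * (L + m * b) \<le> a * R"
    using assms(1,4) by (rule mult_left_mono[rotated])
  ultimately have "L * (a + b) \<le> a * R"
    by (simp add: algebra_simps)
  then show ?thesis
    using assms(1,2) by (simp add: le_divide_eq mult.commute)
qed

lemma sum_diff_le_mult_card_support:
  fixes a :: "'i \<Rightarrow> real"
  assumes "finite I" "N \<subseteq> I" "\<forall>k\<in>I - N. a k = 0" "S \<subseteq> I"
    and "\<forall>k\<in>S. m \<le> a k" "\<forall>k\<in>I - S. a k \<le> m" "0 \<le> m"
  shows "(\<Sum>k\<in>I - S. a k) \<le> m * (real (card N) - real (card S))"
proof -
  have fin: "finite N" "finite S"
    using assms(1,2,4) finite_subset by auto
  have "(\<Sum>k\<in>I - S. a k) = (\<Sum>k\<in>N - S. a k)"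
    using assms(1-3) by (intro sum.mono_neutral_right) auto
  also have "\<dots> \<le> real (card (N - S)) * m"
    using assms(2,6) by (intro sum_bounded_above) auto
  finally have le: "(\<Sum>k\<in>I - S. a k) \<le> real (card (N - S)) * m" .
  show ?thesis
  proof (cases "m = 0")
    case True
    with le show ?thesis
      by simp
  next
    case False
    have "S \<subseteq> N"
    proof
      fix k assume "k \<in> S"
      then have "a k \<noteq> 0"
        using assms(5,7) False by force
      with \<open>k \<in> S\<close> show "k \<in> N"
        using assms(3,4) by blast
    qed
    then have "real (card (N - S)) = real (card N) - real (card S)"
      using fin by (simp add: card_Diff_subset card_mono of_nat_diff)
    with le show ?thesis
      by (simp add: mult.commute)
  qed
qed

lemma sum_diff_exchange:
  fixes a :: "'i \<Rightarrow> real"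
  assumes "finite I" "S \<subseteq> I" "T \<subseteq> I" "\<forall>k\<in>S. m \<le> a k" "\<forall>k\<in>I - S. a k \<le> m"
  shows "(\<Sum>k\<in>I - S. a k) + m * (real (card S) - real (card T)) \<le> (\<Sum>k\<in>I - T. a k)"
proof -
  have fin: "finite S" "finite T"
    using assms(1-3) finite_subset by auto
  have "(\<Sum>k\<in>I - T. a k) = (\<Sum>k\<in>I - T - (S - T). a k) + (\<Sum>k\<in>S - T. a k)"
    using assms(1,2) by (intro sum.subset_diff) auto
  moreover have "(\<Sum>k\<in>I - S. a k) = (\<Sum>k\<in>I - S - (T - S). a k) + (\<Sum>k\<in>T - S. a k)"
    using assms(1,3) by (intro sum.subset_diff) auto
  moreover have "I - T - (S - T) = I - S - (T - S)"
    by blast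
  moreover have "real (card (S - T)) * m \<le> (\<Sum>k\<in>S - T. a k)"
    using assms(4) by (intro sum_bounded_below) auto
  moreover have "(\<Sum>k\<in>T - S. a k) \<le> real (card (T - S)) * m"
    using assms(3,5) by (intro sum_bounded_above) auto
  moreover have "card S = card (S \<inter> T) + card (S - T)" "card T = card (S \<inter> T) + card (T - S)"
    using fin card_Int_Diff[of S T] card_Int_Diff[of T S] by (auto simp: Int_commute)
  ultimately show ?thesis
    by (simp add: algebra_simps)
qed

lemma sum_outside_largest_le:
  fixes a :: "'i \<Rightarrow> real"
  assumes "finite I" "\<forall>k\<in>I. 0 \<le> a k"
    and "N \<subseteq> I" "\<forall>k\<in>I - N. a k = 0" "card N \<le> s0"
    and "S \<subseteq> I" "card S = min s2 (card I)" "\<forall>k\<in>S. \<forall>k'\<in>I - S. a k' \<le> a k"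
    and "T \<subseteq> I" "card T \<le> s1" "s1 < s2" "s2 < s0"
  shows "(\<Sum>k\<in>I - S. a k) \<le> (real s0 - real s2) / (real s0 - real s1) * (\<Sum>k\<in>I - T. a k)"
proof (cases "card I \<le> s2")
  case True
  then have "S = I"
    using assms(1,6,7) by (simp add: card_subset_eq)
  moreover have "0 \<le> (\<Sum>k\<in>I - T. a k)"
    using assms(2) by (intro sum_nonneg) auto
  ultimately show ?thesis
    using assms(11,12) by simp
next
  case False
  then have cardS: "card S = s2"
    using assms(7) by simp
  then have "S \<noteq> {}"
    using assms(11) by auto
  define m where "m = Min (a ` S)"
  have fS: "finite S"
    using assms(1,6) finite_subset by auto
  have below: "\<forall>k\<in>S. m \<le> a k"
    using fS by (simp add: m_def)
  have "m \<in> a ` S"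
    unfolding m_def using fS \<open>S \<noteq> {}\<close> by (intro Min_in) auto
  then obtain k0 where "k0 \<in> S" "a k0 = m"
    by (metis imageE)
  then have above: "\<forall>k\<in>I - S. a k \<le> m" and "0 \<le> m"
    using assms(2,6,8) by auto
  have "(\<Sum>k\<in>I - S. a k) \<le> m * (real (card N) - real (card S))"
    by (rule sum_diff_le_mult_card_support[OF assms(1,3,4,6) below above \<open>0 \<le> m\<close>])
  also have "\<dots> \<le> m * (real s0 - real s2)"
    using assms(5) cardS \<open>0 \<le> m\<close> by (intro mult_left_mono) auto
  finally have "(\<Sum>k\<in>I - S. a k) \<le> m * (real s0 - real s2)" .
  moreover have "m * (real s2 - real s1) \<le> m * (real (card S) - real (card T))"
    using assms(10) cardS \<open>0 \<le> m\<close> by (intro mult_left_mono) auto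
  then have "(\<Sum>k\<in>I - S. a k) + m * (real s2 - real s1) \<le> (\<Sum>k\<in>I - T. a k)"
    using sum_diff_exchange[OF assms(1,6,9) below above] by linarith
  ultimately show ?thesis
    using le_ratio_if_exchange[of "real s0 - real s2" "real s2 - real s1"] assms(11,12)
    by simp
qed

section \<open>Singular vectors\<close>

lemma norm_matrix_power2_orthonormal:
  fixes A :: "real^'n^'m"
  assumes "orthonormal_on v {..<CARD('n)}"
  shows "norm A ^ 2 = (\<Sum>i<CARD('n). norm (A *v v i) ^ 2)"
proof -
  have "(\<Sum>i<CARD('n). norm (A *v v i) ^ 2) = (\<Sum>i<CARD('n). \<Sum>a\<in>UNIV. inner (A $ a) (v i) ^ 2)"
    by (simp add: norm_vec_power2 matrix_vector_mul_component)
  also have "\<dots> = (\<Sum>a\<in>UNIV. \<Sum>i<CARD('n). inner (A $ a) (v i) ^ 2)"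
    by (rule sum.swap)
  also have "\<dots> = (\<Sum>a\<in>UNIV. norm (A $ a) ^ 2)"
    using orthonormal_on_Parseval(2)[of v] assms by simp
  finally show ?thesis
    by (simp add: norm_vec_power2)
qed

(* Greedy, variational construction of right singular vectors; it needs no spectral theorem. *)
definition successive_maximizers :: "real^'n^'m \<Rightarrow> (nat \<Rightarrow> real^'n) \<Rightarrow> nat \<Rightarrow> bool" where
  "successive_maximizers M v k \<longleftrightarrow>
     (\<forall>i<k. \<forall>x. (\<forall>j<i. inner x (v j) = 0) \<longrightarrow> norm (M *v x) \<le> norm (M *v v i) * norm x)"

lemma exists_maximizer_orthogonal:
  fixes M :: "real^'n^'m"
  assumes "finite V" "card V < CARD('n)"
  obtains u where "norm u = 1" "\<And>w. w \<in> V \<Longrightarrow> inner u w = 0"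
    "\<And>x. (\<And>w. w \<in> V \<Longrightarrow> inner x w = 0) \<Longrightarrow> norm (M *v x) \<le> norm (M *v u) * norm x"
proof -
  define T where "T = {x::real^'n. \<forall>w\<in>V. inner x w = 0}"
  have "subspace T"
    unfolding T_def subspace_def by (auto simp: inner_add_left)
  then have "compact (sphere 0 1 \<inter> T)"
    by (intro compact_Int_closed closed_subspace) auto
  have "dim V < DIM(real^'n)"
    using dim_le_card[OF span_superset assms(1)] assms(2) by simp
  then obtain y where "y \<noteq> 0" "\<And>w. w \<in> span V \<Longrightarrow> orthogonal y w"
    by (rule orthogonal_to_subspace_exists) blast
  then have "y /\<^sub>R norm y \<in> sphere 0 1 \<inter> T"
    by (auto simp: T_def orthogonal_def span_base)
  then obtain u where u: "u \<in> sphere 0 1 \<inter> T"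
    and max: "\<And>z. z \<in> sphere 0 1 \<inter> T \<Longrightarrow> norm (M *v z) \<le> norm (M *v u)"
    using continuous_attains_sup[OF \<open>compact _\<close>, of "\<lambda>z. norm (M *v z)"]
    by (metis continuous_on_norm matrix_vector_mult_linear_continuous_on empty_iff)
  show ?thesis
  proof (rule that)
    show "norm u = 1" "\<And>w. w \<in> V \<Longrightarrow> inner u w = 0"
      using u by (auto simp: T_def)
  next
    fix x assume x: "\<And>w. w \<in> V \<Longrightarrow> inner x w = 0"
    show "norm (M *v x) \<le> norm (M *v u) * norm x"
    proof (cases "x = 0")
      case False
      then have "x /\<^sub>R norm x \<in> sphere 0 1 \<inter> T"
        using x by (simp add: T_def)
      then have "norm (M *v (x /\<^sub>R norm x)) \<le> norm (M *v u)"
        by (rule max)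
      then have "norm (M *v x) / norm x \<le> norm (M *v u)"
        by (simp add: matrix_vector_mult_scaleR divide_inverse mult.commute)
      with False show ?thesis
        by (simp add: divide_le_eq mult.commute)
    qed simp
  qed
qed

lemma successive_maximizers_exist:
  fixes M :: "real^'n^'m"
  assumes "k \<le> CARD('n)"
  shows "\<exists>v. orthonormal_on v {..<k} \<and> successive_maximizers M v k"
  using assms
proof (induction k)
  case 0
  show ?case
    by (auto simp: orthonormal_on_def successive_maximizers_def)
next
  case (Suc k)
  then obtain v where v: "orthonormal_on v {..<k}" "successive_maximizers M v k"
    by auto
  have card: "card (v ` {..<k}) < CARD('n)"
    using card_image_le[of "{..<k}" v] Suc.prems by simp
  obtain u where u: "norm u = 1" "\<And>w. w \<in> v ` {..<k} \<Longrightarrow> inner u w = 0"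
    and max: "\<And>x. (\<And>w. w \<in> v ` {..<k} \<Longrightarrow> inner x w = 0) \<Longrightarrow>
      norm (M *v x) \<le> norm (M *v u) * norm x"
    by (rule exists_maximizer_orthogonal[OF _ card]) auto
  have "successive_maximizers M (v(k := u)) (Suc k)"
    using v(2) max unfolding successive_maximizers_def by (auto simp: less_Suc_eq)
  moreover have "orthonormal_on (v(k := u)) {..<Suc k}"
    using u by (intro orthonormal_on_extend[OF v(1)]) auto
  ultimately show ?case
    by blast
qed

lemma linear_coeff_zero_if_le_quadratic:
  fixes a c :: real
  assumes "\<And>t. 2 * t * a \<le> t ^ 2 * c"
  shows "a = 0"
proof (rule ccontr)
  assume "a \<noteq> 0"
  define d where "d = \<bar>c\<bar> + 1"
  have "d > 0"
    by (simp add: d_def)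
  have "2 * (a / d) * a * d ^ 2 \<le> (a / d) ^ 2 * c * d ^ 2"
    using assms[of "a / d"] by (rule mult_right_mono) simp
  then have "2 * a ^ 2 * d \<le> a ^ 2 * c"
    using \<open>d > 0\<close> by (simp add: power2_eq_square field_simps)
  moreover have "a ^ 2 * c < a ^ 2 * (2 * d)"
    using \<open>a \<noteq> 0\<close> by (intro mult_strict_left_mono) (auto simp: d_def)
  ultimately show False
    by linarith
qed

(* Along v i + t v j the quotient norm (M *v x) / norm x is maximal at t = 0,
   so the term linear in t must vanish. *)
lemma successive_maximizers_images_orthogonal:
  fixes M :: "real^'n^'m"
  assumes "orthonormal_on v {..<n}" "successive_maximizers M v n" "i < j" "j < n"
  shows "inner (M *v v i) (M *v v j) = 0"
proof (rule linear_coeff_zero_if_le_quadratic)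
  fix t :: real
  let ?a = "inner (M *v v i) (M *v v j)"
  let ?x = "v i + t *\<^sub>R v j"
  have v: "inner (v p) (v q) = (if p = q then 1 else 0)" if "p < n" "q < n" for p q
    using assms(1) that by (simp add: orthonormal_on_def)
  have "\<forall>l<i. inner ?x (v l) = 0"
    using v assms(3,4) by (simp add: inner_add_left)
  then have "norm (M *v ?x) \<le> norm (M *v v i) * norm ?x"
    using assms(2-4) by (simp add: successive_maximizers_def)
  then have "norm (M *v ?x) ^ 2 \<le> norm (M *v v i) ^ 2 * norm ?x ^ 2"
    by (metis norm_ge_zero power_mono power_mult_distrib)
  moreover have "norm ?x ^ 2 = 1 + t ^ 2"
    unfolding power2_norm_eq_inner using v[of i i] v[of j j] v[of i j] v[of j i] assms(3,4)
    by (simp add: inner_add_left inner_add_right power2_eq_square)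
  moreover have "norm (M *v ?x) ^ 2 = norm (M *v v i) ^ 2 + 2 * t * ?a + t ^ 2 * norm (M *v v j) ^ 2"
    unfolding power2_norm_eq_inner
    by (simp add: matrix_vector_right_distrib matrix_vector_mult_scaleR
        inner_add_left inner_add_right inner_commute power2_eq_square algebra_simps)
  ultimately show "2 * t * ?a \<le> t ^ 2 * (norm (M *v v i) ^ 2 - norm (M *v v j) ^ 2)"
    by (simp add: algebra_simps)
qed

(* The v i are right singular vectors of M and the norm (M *v v i) its singular values,
   in decreasing order. *)
definition singular_basis :: "real^'n^'m \<Rightarrow> (nat \<Rightarrow> real^'n) \<Rightarrow> bool" where
  "singular_basis M v \<longleftrightarrow> orthonormal_on v {..<CARD('n)} \<and>
     (\<forall>i<CARD('n). \<forall>j<CARD('n). i \<noteq> j \<longrightarrow> inner (M *v v i) (M *v v j) = 0) \<and>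
     (\<forall>i j. i \<le> j \<longrightarrow> j < CARD('n) \<longrightarrow> norm (M *v v j) \<le> norm (M *v v i))"

lemma singular_basis_exists: "\<exists>v. singular_basis (M :: real^'n^'m) v"
proof -
  obtain v where o: "orthonormal_on v {..<CARD('n)}" and max: "successive_maximizers M v CARD('n)"
    using successive_maximizers_exist[of "CARD('n)" M] by auto
  have "inner (M *v v i) (M *v v j) = 0" if "i < CARD('n)" "j < CARD('n)" "i \<noteq> j" for i j
    using successive_maximizers_images_orthogonal[OF o max] that
    by (metis inner_commute linorder_neqE_nat)
  moreover have "norm (M *v v j) \<le> norm (M *v v i)" if "i \<le> j" "j < CARD('n)" for i j
  proof -
    have "\<forall>l<i. inner (v j) (v l) = 0"
      using o that by (simp add: orthonormal_on_def)
    then have "norm (M *v v j) \<le> norm (M *v v i) * norm (v j)"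
      using max that unfolding successive_maximizers_def by simp
    then show ?thesis
      using orthonormal_on_norm[OF o, of j] that by simp
  qed
  ultimately show ?thesis
    using o unfolding singular_basis_def by blast
qed

lemma singular_basis_norm_mult:
  fixes M :: "real^'n^'m"
  assumes "singular_basis M v"
  shows "norm (M *v x) ^ 2 = (\<Sum>i<CARD('n). inner x (v i) ^ 2 * norm (M *v v i) ^ 2)"
proof -
  have o: "orthonormal_on v {..<DIM(real^'n)}"
    using assms by (simp add: singular_basis_def)
  have "M *v x = (\<Sum>i<CARD('n). inner x (v i) *\<^sub>R (M *v v i))"
    using arg_cong[OF orthonormal_on_Parseval(1)[OF o, of x], of "\<lambda>y. M *v y"]
    by (simp add: vec.sum matrix_vector_mult_scaleR)
  moreover have "pairwise (\<lambda>i j. orthogonal (inner x (v i) *\<^sub>R (M *v v i)) (inner x (v j) *\<^sub>R (M *v v j))) {..<CARD('n)}"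
    using assms by (intro pairwise_ortho_scaleR) (auto simp: pairwise_def orthogonal_def singular_basis_def)
  ultimately show ?thesis
    by (simp add: norm_sum_Pythagorean power_mult_distrib)
qed

lemma singular_basis_vanishes_beyond_rank:
  fixes M :: "real^'n^'m"
  assumes "singular_basis M v" "rank M \<le> i" "i < CARD('n)"
  shows "M *v v i = 0"
proof (rule ccontr)
  assume "M *v v i \<noteq> 0"
  let ?W = "(\<lambda>j. M *v v j) ` {..i}"
  have nz: "M *v v j \<noteq> 0" if "j \<le> i" for j
    using assms(1,3) \<open>M *v v i \<noteq> 0\<close> that unfolding singular_basis_def by force
  have orth: "inner (M *v v j) (M *v v l) = 0" if "j \<le> i" "l \<le> i" "j \<noteq> l" for j l
    using assms(1,3) that unfolding singular_basis_def by auto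
  have "inj_on (\<lambda>j. M *v v j) {..i}"
    using nz orth by (intro inj_onI) (metis atMost_iff inner_eq_zero_iff)
  then have "card ?W = Suc i"
    by (simp add: card_image)
  have "pairwise orthogonal ?W"
    using orth by (auto simp: pairwise_def orthogonal_def)
  moreover have "0 \<notin> ?W"
    using nz by auto
  ultimately have "independent ?W"
    by (rule pairwise_orthogonal_independent)
  then have "card ?W \<le> rank M"
    using independent_card_le_dim[of ?W "range (\<lambda>x. M *v x)"] by (auto simp: rank_dim_range)
  with \<open>card ?W = Suc i\<close> assms(2) show False
    by simp
qed

section \<open>Eckart--Young bounds\<close>

lemma norm_power2_sub_le_if_rows_in_span:
  fixes M C :: "real^'n^'m"
  assumes "orthonormal_on e I" "finite I" "\<And>a. C $ a \<in> span (e ` I)"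
  shows "norm M ^ 2 - (\<Sum>i\<in>I. norm (M *v e i) ^ 2) \<le> norm (M - C) ^ 2"
proof -
  have "(\<Sum>i\<in>I. norm (M *v e i) ^ 2) = (\<Sum>a\<in>UNIV. \<Sum>i\<in>I. inner (M $ a) (e i) ^ 2)"
    by (simp add: norm_vec_power2 matrix_vector_mul_component sum.swap[of _ I])
  then have "norm M ^ 2 - (\<Sum>i\<in>I. norm (M *v e i) ^ 2)
      = (\<Sum>a\<in>UNIV. norm (M $ a) ^ 2 - (\<Sum>i\<in>I. inner (M $ a) (e i) ^ 2))"
    by (simp add: norm_vec_power2[of M] sum_subtractf)
  also have "\<dots> \<le> (\<Sum>a\<in>UNIV. norm ((M - C) $ a) ^ 2)"
    by (intro sum_mono) (simp add: orthonormal_on_dist_span_ge[OF assms])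
  finally show ?thesis
    by (simp add: norm_vec_power2[of "M - C"])
qed

(* Ky Fan's maximum principle: the energy captured by B is a combination of the squared
   singular values with weights in [0, 1] summing to card B. *)
lemma sum_norm_mult_orthonormal_le_singular_head:
  fixes M :: "real^'n^'m"
  assumes sb: "singular_basis M v" and oB: "orthonormal_on id B" and "finite B" "card B \<le> r"
  shows "(\<Sum>b\<in>B. norm (M *v b) ^ 2) \<le> (\<Sum>i<min r CARD('n). norm (M *v v i) ^ 2)"
proof -
  let ?n = "CARD('n)"
  define \<mu> where "\<mu> i = norm (M *v v i) ^ 2" for i
  have o: "orthonormal_on v {..<?n}"
    using sb by (simp add: singular_basis_def)
  have "(\<Sum>b\<in>B. norm (M *v b) ^ 2) = (\<Sum>b\<in>B. \<Sum>i<?n. inner b (v i) ^ 2 * \<mu> i)"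
    by (intro sum.cong refl) (subst singular_basis_norm_mult[OF sb], simp add: \<mu>_def)
  also have "\<dots> = (\<Sum>i<?n. \<mu> i * (\<Sum>b\<in>B. inner b (v i) ^ 2))"
    by (subst sum.swap) (simp add: sum_distrib_left mult.commute)
  also have "\<dots> \<le> (\<Sum>i<min r ?n. \<mu> i)"
  proof (rule weighted_sum_le_head_sum)
    show "\<mu> j \<le> \<mu> i" if "i \<le> j" "j < ?n" for i j
      using sb that by (simp add: \<mu>_def singular_basis_def power_mono)
    show "0 \<le> \<mu> i" for i
      by (simp add: \<mu>_def)
    show "0 \<le> (\<Sum>b\<in>B. inner b (v i) ^ 2) \<and> (\<Sum>b\<in>B. inner b (v i) ^ 2) \<le> 1" if "i < ?n" for i
      using orthonormal_on_Bessel[OF oB \<open>finite B\<close>, of "v i"] orthonormal_on_norm[OF o, of i] that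
      by (simp add: sum_nonneg inner_commute)
    have "(\<Sum>i<?n. \<Sum>b\<in>B. inner b (v i) ^ 2) = (\<Sum>b\<in>B. norm b ^ 2)"
      using orthonormal_on_Parseval(2)[of v] o by (simp add: sum.swap[of _ B])
    also have "\<dots> = real (card B)"
      using orthonormal_on_norm[OF oB] by simp
    finally show "(\<Sum>i<?n. \<Sum>b\<in>B. inner b (v i) ^ 2) \<le> real r"
      using \<open>card B \<le> r\<close> by simp
  qed
  finally show ?thesis
    by (simp add: \<mu>_def)
qed

lemma singular_tail_le_dist:
  fixes M C :: "real^'n^'m"
  assumes sb: "singular_basis M v" and "rank C \<le> r"
  shows "(\<Sum>i=r..<CARD('n). norm (M *v v i) ^ 2) \<le> norm (M - C) ^ 2"
proof -
  let ?n = "CARD('n)"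
  obtain B where B: "pairwise orthogonal B" "\<And>x. x \<in> B \<Longrightarrow> norm x = 1" "independent B"
    "card B = dim (span (rows C))" "span B = span (rows C)"
    by (rule orthonormal_basis_subspace[OF subspace_span]) blast
  have "finite B"
    using B(3) by (rule finiteI_independent)
  have oB: "orthonormal_on id B"
    using B(1,2) by (auto simp: orthonormal_on_def pairwise_def orthogonal_def dot_square_norm)
  have rows: "C $ a \<in> span (id ` B)" for a
    using B(5) by (auto simp: rows_def row_def vec_lambda_eta intro: span_base)
  have "norm M ^ 2 - (\<Sum>b\<in>B. norm (M *v b) ^ 2) \<le> norm (M - C) ^ 2"
    using norm_power2_sub_le_if_rows_in_span[OF oB \<open>finite B\<close> rows] by (simp only: id_apply)
  moreover have "(\<Sum>b\<in>B. norm (M *v b) ^ 2) \<le> (\<Sum>i<min r ?n. norm (M *v v i) ^ 2)"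
    using B(4) \<open>rank C \<le> r\<close>
    by (intro sum_norm_mult_orthonormal_le_singular_head[OF sb oB \<open>finite B\<close>]) (simp add: row_rank_def)
  moreover have "norm M ^ 2 = (\<Sum>i<min r ?n. norm (M *v v i) ^ 2) + (\<Sum>i=r..<?n. norm (M *v v i) ^ 2)"
    using norm_matrix_power2_orthonormal[of v M] sb sum_lessThan_split[of r ?n]
    by (cases "r \<le> ?n") (simp_all add: singular_basis_def min_def)
  ultimately show ?thesis
    by linarith
qed

definition singular_truncation :: "real^'n^'m \<Rightarrow> (nat \<Rightarrow> real^'n) \<Rightarrow> nat \<Rightarrow> real^'n^'m" where
  "singular_truncation M v r = (\<chi> a b. \<Sum>i<r. (M *v v i) $ a * v i $ b)"

lemma singular_truncation_mult:
  "singular_truncation M v r *v x = (\<Sum>i<r. inner (v i) x *\<^sub>R (M *v v i))"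
proof -
  have "(singular_truncation M v r *v x) $ a = (\<Sum>i<r. inner (v i) x * (M *v v i) $ a)" for a
  proof -
    have "(singular_truncation M v r *v x) $ a = (\<Sum>b\<in>UNIV. \<Sum>i<r. (M *v v i) $ a * v i $ b * x $ b)"
      by (simp add: singular_truncation_def matrix_vector_mult_def sum_distrib_right)
    also have "\<dots> = (\<Sum>i<r. \<Sum>b\<in>UNIV. (M *v v i) $ a * v i $ b * x $ b)"
      by (rule sum.swap)
    finally show ?thesis
      by (simp add: inner_vec_def sum_distrib_left sum_distrib_right mult_ac)
  qed
  then show ?thesis
    by (simp add: vec_eq_iff sum_component)
qed

lemma rank_singular_truncation: "rank (singular_truncation M v r) \<le> r"
proof -
  have "range (\<lambda>x. singular_truncation M v r *v x) \<subseteq> span ((\<lambda>i. M *v v i) ` {..<r})"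
    unfolding singular_truncation_mult by (auto intro!: span_sum span_scale intro: span_base)
  then have "dim (range (\<lambda>x. singular_truncation M v r *v x)) \<le> card ((\<lambda>i. M *v v i) ` {..<r})"
    by (rule dim_le_card) simp
  also have "\<dots> \<le> r"
    using card_image_le[of "{..<r}" "\<lambda>i. M *v v i"] by simp
  finally show ?thesis
    by (simp add: rank_dim_range)
qed

lemma best_rank_approx_dist_le_singular_tail:
  fixes M B :: "real^'n^'m"
  assumes "orthonormal_on v {..<CARD('n)}" "best_rank_approx r M B"
  shows "norm (M - B) ^ 2 \<le> (\<Sum>i=r..<CARD('n). norm (M *v v i) ^ 2)"
proof -
  let ?n = "CARD('n)"
  define C where "C = singular_truncation M v (min r ?n)"
  have "norm (M - B) \<le> norm (M - C)"
    using assms(2) rank_singular_truncation[of M v "min r ?n"]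
    by (auto simp: best_rank_approx_def frob_mat_eq_norm C_def)
  then have "norm (M - B) ^ 2 \<le> norm (M - C) ^ 2"
    by (simp add: power_mono)
  also have "\<dots> = (\<Sum>j<?n. norm ((M - C) *v v j) ^ 2)"
    by (rule norm_matrix_power2_orthonormal[OF assms(1)])
  also have "\<dots> = (\<Sum>j<?n. if r \<le> j then norm (M *v v j) ^ 2 else 0)"
  proof (rule sum.cong[OF refl])
    fix j assume "j \<in> {..<?n}"
    then have "C *v v j = (\<Sum>i<min r ?n. (if i = j then 1 else 0) *\<^sub>R (M *v v i))"
      using assms(1) by (auto simp: C_def singular_truncation_mult orthonormal_on_def intro: sum.cong)
    also have "\<dots> = (if j < r then M *v v j else 0)"
      using \<open>j \<in> {..<?n}\<close> by (simp add: if_distrib[of "\<lambda>c. c *\<^sub>R _"] cong: if_cong)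
    finally show "norm ((M - C) *v v j) ^ 2 = (if r \<le> j then norm (M *v v j) ^ 2 else 0)"
      by (simp add: matrix_vector_mult_diff_rdistrib)
  qed
  also have "\<dots> = (\<Sum>j=r..<?n. norm (M *v v j) ^ 2)"
    by (simp add: sum.If_cases Int_def atLeastLessThan_def lessThan_def atLeast_def conj_commute)
  finally show ?thesis .
qed

lemma best_rank_approx_dist_le:
  fixes M B C :: "real^'n^'m"
  assumes "rank M \<le> r0" "rank C \<le> r1" "best_rank_approx r2 M B" "r1 < r2" "r2 < r0"
  shows "norm (M - B) ^ 2 \<le> (real r0 - real r2) / (real r0 - real r1) * norm (M - C) ^ 2"
proof -
  let ?n = "CARD('n)"
  obtain v where sb: "singular_basis M v"
    using singular_basis_exists by blast
  define \<mu> where "\<mu> i = norm (M *v v i) ^ 2" for i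
  have tail: "{..<?n} - {..<min r ?n} = {r..<?n}" for r
    by auto
  have "(\<Sum>i\<in>{..<?n} - {..<min r2 ?n}. \<mu> i)
      \<le> (real r0 - real r2) / (real r0 - real r1) * (\<Sum>i\<in>{..<?n} - {..<min r1 ?n}. \<mu> i)"
  proof (rule sum_outside_largest_le[where N = "{..<min r0 ?n}"])
    show "\<forall>k\<in>{..<?n} - {..<min r0 ?n}. \<mu> k = 0"
      using singular_basis_vanishes_beyond_rank[OF sb] assms(1) by (auto simp: \<mu>_def)
    show "\<forall>k\<in>{..<min r2 ?n}. \<forall>k'\<in>{..<?n} - {..<min r2 ?n}. \<mu> k' \<le> \<mu> k"
      using sb by (auto simp: \<mu>_def singular_basis_def power_mono)
  qed (use assms(4,5) in \<open>auto simp: \<mu>_def\<close>)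
  then have "(\<Sum>i=r2..<?n. \<mu> i) \<le> (real r0 - real r2) / (real r0 - real r1) * (\<Sum>i=r1..<?n. \<mu> i)"
    by (simp only: tail)
  moreover have "norm (M - B) ^ 2 \<le> (\<Sum>i=r2..<?n. \<mu> i)"
    using sb assms(3) unfolding \<mu>_def singular_basis_def
    by (blast intro: best_rank_approx_dist_le_singular_tail)
  moreover have "(\<Sum>i=r1..<?n. \<mu> i) \<le> norm (M - C) ^ 2"
    unfolding \<mu>_def by (rule singular_tail_le_dist[OF sb assms(2)])
  moreover have "0 \<le> (real r0 - real r2) / (real r0 - real r1)"
    using assms(4,5) by simp
  ultimately show ?thesis
    by (meson mult_left_mono order_trans)
qed

lemma best_rank_approx_zero: "best_rank_approx r 0 B \<Longrightarrow> B = 0"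
  unfolding best_rank_approx_def frob_mat_eq_norm
  by (drule conjunct2, drule spec[of _ 0]) simp

section \<open>Slices of a tensor\<close>

lemma keep_largest_slices_dist_le:
  fixes A X Y :: "'k::finite \<Rightarrow> real^'n^'m"
  assumes "card {k. A k \<noteq> 0} \<le> s0" "card {k. Y k \<noteq> 0} \<le> s1" "s1 < s2" "s2 < s0"
    and "card S = min s2 CARD('k)" "\<forall>k\<in>S. \<forall>k'. k' \<notin> S \<longrightarrow> norm (A k') \<le> norm (A k)"
    and "\<And>k. X k = (if k \<in> S then A k else 0)"
  shows "frob (X - A) \<le> sqrt ((real s0 - real s2) / (real s0 - real s1)) * frob (Y - A)"
proof (rule power2_le_imp_le)
  define a where "a k = norm (A k) ^ 2" for k
  define c where "c = (real s0 - real s2) / (real s0 - real s1)"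
  have "0 \<le> c"
    using assms(3,4) by (simp add: c_def)
  have "(\<Sum>k\<in>UNIV - {k. Y k \<noteq> 0}. a k) = (\<Sum>k\<in>UNIV - {k. Y k \<noteq> 0}. norm ((Y - A) k) ^ 2)"
    by (rule sum.cong) (auto simp: a_def)
  also have "\<dots> \<le> frob (Y - A) ^ 2"
    unfolding frob_power2 by (rule sum_mono2) auto
  finally have outside_Y: "(\<Sum>k\<in>UNIV - {k. Y k \<noteq> 0}. a k) \<le> frob (Y - A) ^ 2" .
  have "frob (X - A) ^ 2 = (\<Sum>k\<in>UNIV - S. norm ((X - A) k) ^ 2)"
    unfolding frob_power2 by (rule sum.mono_neutral_right) (auto simp: assms(7))
  also have "\<dots> = (\<Sum>k\<in>UNIV - S. a k)"
    by (rule sum.cong) (auto simp: assms(7) a_def)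
  also have "\<dots> \<le> c * (\<Sum>k\<in>UNIV - {k. Y k \<noteq> 0}. a k)"
    unfolding c_def
    by (rule sum_outside_largest_le[where N = "{k. A k \<noteq> 0}"]) (use assms in \<open>auto simp: a_def power_mono\<close>)
  also have "\<dots> \<le> c * frob (Y - A) ^ 2"
    using outside_Y \<open>0 \<le> c\<close> by (rule mult_left_mono)
  finally have "frob (X - A) ^ 2 \<le> c * frob (Y - A) ^ 2" .
  then show "frob (X - A) ^ 2 \<le> (sqrt c * frob (Y - A)) ^ 2"
    using \<open>0 \<le> c\<close> by (simp only: power_mult_distrib real_sqrt_pow2)
  show "0 \<le> sqrt c * frob (Y - A)"
    using \<open>0 \<le> c\<close> by (simp add: frob_nonneg)
qed

lemma slicewise_best_rank_approx_dist_le: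
  fixes Z Y Zr :: "'k::finite \<Rightarrow> real^'n^'m"
  assumes "\<And>k. rank (Z k) \<le> r0" "\<And>k. rank (Y k) \<le> r1" "\<And>k. best_rank_approx r2 (Z k) (Zr k)"
    and "r1 < r2" "r2 < r0"
  shows "frob (Zr - Z) \<le> sqrt ((real r0 - real r2) / (real r0 - real r1)) * frob (Y - Z)"
proof -
  have "norm ((Z - Zr) k) ^ 2 \<le> (real r0 - real r2) / (real r0 - real r1) * norm ((Z - Y) k) ^ 2" for k
    using best_rank_approx_dist_le[OF assms(1,2,3,4,5)] by simp
  then have "frob (Z - Zr) \<le> sqrt ((real r0 - real r2) / (real r0 - real r1)) * frob (Z - Y)"
    using assms(4,5) by (intro frob_le_sqrt_mult_if_slices_le) auto
  then show ?thesis
    by (simp add: frob_minus_commute)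
qed

lemma slicewise_best_rank_approx_support:
  fixes Z Zr :: "'k::finite \<Rightarrow> real^'n^'m"
  assumes "\<And>k. best_rank_approx r (Z k) (Zr k)"
  shows "card {k. Zr k \<noteq> 0} \<le> card {k. Z k \<noteq> 0}"
proof (rule card_mono[OF finite], intro subsetI CollectI)
  fix k assume "k \<in> {k. Zr k \<noteq> 0}"
  then show "Z k \<noteq> 0"
    using best_rank_approx_zero[of r "Zr k"] assms[of k] by (cases "Z k = 0") simp_all
qed

theorem lemma2:
  fixes Z Y X :: "'k::finite \<Rightarrow> real^'n^'m"
    and r0 r1 r2 s0 s1 s2 :: nat
  assumes "Z \<in> Theta2 r0 s0"
    and "r1 < r2" and "r2 < r0" and "s1 < s2" and "s2 < s0"
    and "Y \<in> Theta2 r1 s1"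
    and "is_P_Theta2 r2 s2 Z X"
  shows "frob (X - Z) \<le>
    (let \<alpha> = sqrt ((real s0 - real s2) / (real s0 - real s1));
         \<beta> = sqrt ((real r0 - real r2) / (real r0 - real r1))
     in (\<alpha> + \<beta> + \<alpha> * \<beta>) * frob (Y - Z))"
proof -
  define \<alpha> where "\<alpha> = sqrt ((real s0 - real s2) / (real s0 - real s1))"
  define \<beta> where "\<beta> = sqrt ((real r0 - real r2) / (real r0 - real r1))"
  define \<delta> where "\<delta> = frob (Y - Z)"
  obtain Zr S where Zr: "\<And>k. best_rank_approx r2 (Z k) (Zr k)"
    and S: "card S = min s2 CARD('k)" "\<forall>k\<in>S. \<forall>k'. k' \<notin> S \<longrightarrow> norm (Zr k') \<le> norm (Zr k)"
    and X: "\<And>k. X k = (if k \<in> S then Zr k else 0)"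
    using assms(7) unfolding is_P_Theta2_def frob_mat_eq_norm by blast
  have rank_step: "frob (Zr - Z) \<le> \<beta> * \<delta>"
    unfolding \<beta>_def \<delta>_def using assms(1-3,6) Zr
    by (intro slicewise_best_rank_approx_dist_le) (auto simp: Theta2_def)
  have "card {k. Zr k \<noteq> 0} \<le> s0"
    using slicewise_best_rank_approx_support[where Z = Z and Zr = Zr, OF Zr] assms(1)
    by (auto simp: Theta2_def)
  then have "frob (X - Zr) \<le> \<alpha> * frob (Y - Zr)"
    unfolding \<alpha>_def using assms(4-6) S X
    by (intro keep_largest_slices_dist_le) (auto simp: Theta2_def)
  also have "\<dots> \<le> \<alpha> * (\<delta> + \<beta> * \<delta>)"
    using frob_triangle[of Y Zr Z] rank_step assms(4,5)
    by (intro mult_left_mono) (auto simp: \<alpha>_def \<delta>_def frob_minus_commute[of Z Zr])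
  finally have "frob (X - Z) \<le> \<alpha> * (\<delta> + \<beta> * \<delta>) + \<beta> * \<delta>"
    using frob_triangle[of X Z Zr] rank_step by linarith
  then show ?thesis
    by (simp add: Let_def \<alpha>_def \<beta>_def \<delta>_def algebra_simps)
qed

end
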